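(* Let $(N,+,* )$ be a finite planar nearring with $D(N)\ne\{0\}$. Write $(N,+)=N_1\oplus\cdots\oplus N_k$ as the direct sum of its Sylow $p$-subgroups (for distinct primes). Then there is an index $i$ such that for every $j\ne i$ every element of $N_j$ is a zero multiplier (so only the summand $N_i$ carries a nontrivial multiplication).
   Context: A (right) nearring $(N,+,* )$ is a set with a group $(N,+)$, a semigroup $(N,* )$, and right distributivity $(a+b)*c=a*c+b*c$. $N$ is planar if the relation $a\cong b$ ($x*a=x*b$ for all $x$) has at least $3$ classes and for all $a,b,c$ with $a\not\cong b$ the equation $x*a=x*b+c$ has a unique solution. The additive group of a finite planar nearring is nilpotent. The zero multipliers are the $n\in N$ with $x*n=0$ for all $x\in N$. $D(N)=\{n: n*(a+b)=n*a+n*b\ \forall a,b\}$. *)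

theory Defs
  imports Main "HOL-Computational_Algebra.Primes"
begin

definition nearring :: "('a::group_add \<Rightarrow> 'a \<Rightarrow> 'a) \<Rightarrow> bool" where
  "nearring mul \<longleftrightarrow>
     (\<forall>a b c. mul (mul a b) c = mul a (mul b c)) \<and>
     (\<forall>a b c. mul (a + b) c = mul a c + mul b c)"

definition mult_equiv :: "('a \<Rightarrow> 'a \<Rightarrow> 'a) \<Rightarrow> 'a \<Rightarrow> 'a \<Rightarrow> bool" where
  "mult_equiv mul a b \<longleftrightarrow> (\<forall>x. mul x a = mul x b)"

definition planar_nearring :: "('a::group_add \<Rightarrow> 'a \<Rightarrow> 'a) \<Rightarrow> bool" where
  "planar_nearring mul \<longleftrightarrow> nearring mul \<and>
     card (UNIV // {(a, b). mult_equiv mul a b}) \<ge> 3 \<and>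
     (\<forall>a b c. \<not> mult_equiv mul a b \<longrightarrow> (\<exists>!x. mul x a = mul x b + c))"

definition zero_multiplier :: "('a::group_add \<Rightarrow> 'a \<Rightarrow> 'a) \<Rightarrow> 'a \<Rightarrow> bool" where
  "zero_multiplier mul n \<longleftrightarrow> (\<forall>x. mul x n = 0)"

definition distributive_elements :: "('a::group_add \<Rightarrow> 'a \<Rightarrow> 'a) \<Rightarrow> 'a set" where
  "distributive_elements mul = {n. \<forall>a b. mul n (a + b) = mul n a + mul n b}"

definition add_subgroup :: "'a::group_add set \<Rightarrow> bool" where
  "add_subgroup S \<longleftrightarrow> 0 \<in> S \<and> (\<forall>a\<in>S. \<forall>b\<in>S. a + b \<in> S) \<and> (\<forall>a\<in>S. - a \<in> S)"

definition sylow_add :: "nat \<Rightarrow> 'a::{group_add,finite} set \<Rightarrow> bool" where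
  "sylow_add p S \<longleftrightarrow> prime p \<and> add_subgroup S \<and>
     card S = p ^ multiplicity p (card (UNIV :: 'a set))"

end

theory Submission
  imports Defs "HOL-Algebra.Multiplicative_Group"
begin

text \<open>Right multiplication by an element that is not a zero multiplier is injective, by the
uniqueness clause of planarity applied to the equation x * n = x * 0 + c. Take a distributive
d \<noteq> 0. Left multiplication by d is then an additive endomorphism whose kernel consists of
zero multipliers, and d has prime additive order p: if j\<cdot>d \<noteq> 0 and (j k)\<cdot>d = 0, then
z = j\<cdot>y is not a zero multiplier for suitable y, and (k\<cdot>d) * z = (j k \<cdot> d) * y = 0 forces
k\<cdot>d = 0. For n in a Sylow q-subgroup with q \<noteq> p, the element d * n is annihilated both by p
and by a power of q, hence d * n = 0 and n is a zero multiplier.\<close>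

definition additive_group :: "'a::group_add monoid" where
  "additive_group = \<lparr>carrier = UNIV, mult = (+), one = 0\<rparr>"

abbreviation nmult :: "nat \<Rightarrow> 'a::group_add \<Rightarrow> 'a" where
  "nmult n x \<equiv> x [^]\<^bsub>additive_group\<^esub> n"

abbreviation add_ord :: "'a::group_add \<Rightarrow> nat" where
  "add_ord \<equiv> group.ord additive_group"

lemma additive_group_simps [simp]:
  "carrier additive_group = UNIV"
  "x \<otimes>\<^bsub>additive_group\<^esub> y = x + y"
  "\<one>\<^bsub>additive_group\<^esub> = 0"
  by (simp_all add: additive_group_def)

lemma group_additive_group: "group (additive_group :: 'a::group_add monoid)"
  by (rule groupI) (auto simp: add.assoc, metis add.left_inverse)

interpretation additive: group "additive_group :: 'a::group_add monoid"
  by (rule group_additive_group)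

lemma additive_hom_nmult:
  fixes f :: "'a::group_add \<Rightarrow> 'b::group_add"
  assumes "\<And>a b. f (a + b) = f a + f b"
  shows "f (nmult n x) = nmult n (f x)"
proof (induction n)
  case 0
  have "f 0 + f 0 = f 0 + 0" using assms[of 0 0] by simp
  then show ?case by (simp only: add_left_cancel nat_pow_0 additive_group_simps)
next
  case (Suc n)
  then show ?case by (simp add: assms)
qed

lemma additive_inv [simp]: "inv\<^bsub>additive_group\<^esub> x = - x"
  by (rule additive.inv_equality) simp_all

lemma add_subgroup_imp_subgroup: "add_subgroup S \<Longrightarrow> subgroup S additive_group"
  by (rule additive.subgroupI) (auto simp: add_subgroup_def)

lemma nmult_card_add_subgroup:
  fixes S :: "'a::group_add set"
  assumes "add_subgroup S" "finite S" "x \<in> S"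
  shows "nmult (card S) x = 0"
proof -
  interpret S: group "additive_group\<lparr>carrier := S\<rparr>"
    by (rule subgroup.subgroup_is_group[OF add_subgroup_imp_subgroup]) (use assms in auto)
  have "x [^]\<^bsub>additive_group\<lparr>carrier := S\<rparr>\<^esub> order (additive_group\<lparr>carrier := S\<rparr>) = 0"
    using S.pow_order_eq_1 assms(3) by simp
  then show ?thesis
    by (simp add: order_def flip: additive.nat_pow_consistent)
qed

lemma nearring_zero_mult:
  assumes "nearring mul"
  shows "mul 0 c = 0"
proof -
  have "mul 0 c + mul 0 c = mul (0 + 0) c"
    using assms by (simp only: nearring_def)
  also have "\<dots> = mul 0 c + 0" by simp
  finally show ?thesis by (simp only: add_left_cancel)
qed

lemma nearring_nmult_mult:
  assumes "nearring mul"
  shows "mul (nmult n x) y = nmult n (mul x y)"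
  using assms by (intro additive_hom_nmult[where f = "\<lambda>x. mul x y"]) (simp add: nearring_def)

context
  fixes mul :: "'a::group_add \<Rightarrow> 'a \<Rightarrow> 'a"
  assumes planar: "planar_nearring mul"
begin

lemma planar_nearring_nearring: "nearring mul"
  using planar by (simp add: planar_nearring_def)

lemma planar_unique_solution:
  "\<not> mult_equiv mul a b \<Longrightarrow> \<exists>!x. mul x a = mul x b + c"
  using planar by (simp add: planar_nearring_def)

lemma planar_ex_not_mult_equiv: "\<exists>a b. \<not> mult_equiv mul a b"
proof (rule ccontr)
  assume "\<nexists>a b. \<not> mult_equiv mul a b"
  then have "UNIV // {(a, b). mult_equiv mul a b} = {UNIV}"
    by (auto simp: quotient_def)
  with planar show False by (simp add: planar_nearring_def)
qed

text \<open>Both 0 and x * 0 solve y * a = y * b for a non-equivalent pair a, b, since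
(x * 0) * a = x * (0 * a) = x * 0.\<close>
lemma planar_mult_zero: "mul x 0 = 0"
proof -
  obtain a b where ab: "\<not> mult_equiv mul a b"
    using planar_ex_not_mult_equiv by blast
  have "mul (mul x 0) c = mul x 0" for c
    using planar_nearring_nearring by (simp add: nearring_def nearring_zero_mult)
  moreover have "mul 0 c = 0" for c
    using planar_nearring_nearring by (rule nearring_zero_mult)
  ultimately show ?thesis
    using planar_unique_solution[OF ab, of 0] by (metis add_0_right)
qed

lemma planar_right_cancel:
  assumes "\<not> zero_multiplier mul n" and "mul u n = mul v n"
  shows "u = v"
proof -
  have "\<not> mult_equiv mul n 0"
    using assms(1) by (simp add: mult_equiv_def zero_multiplier_def planar_mult_zero)
  from planar_unique_solution[OF this, of "mul u n"] assms(2) show ?thesis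
    by (metis planar_mult_zero add_0)
qed

lemma planar_ex_not_zero_multiplier: "\<exists>y. \<not> zero_multiplier mul y"
proof -
  obtain a b x where "mul x a \<noteq> mul x b"
    using planar_ex_not_mult_equiv by (auto simp: mult_equiv_def)
  then show ?thesis by (metis zero_multiplier_def)
qed

lemma planar_zero_multiplierI:
  assumes "d \<noteq> 0" and "mul d w = 0"
  shows "zero_multiplier mul w"
  using planar_right_cancel[of w d 0] assms planar_nearring_nearring
  by (auto simp: nearring_zero_mult)

lemma distributive_nmult:
  "d \<in> distributive_elements mul \<Longrightarrow> mul d (nmult n x) = nmult n (mul d x)"
  by (rule additive_hom_nmult) (simp add: distributive_elements_def)

lemma distributive_nmult_eq_zero:
  assumes d: "d \<in> distributive_elements mul"
    and "nmult j d \<noteq> 0" and "nmult (j * k) d = 0"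
  shows "nmult k d = 0"
proof -
  obtain y where y: "\<not> zero_multiplier mul y"
    using planar_ex_not_zero_multiplier by blast
  have "mul (nmult j d) y \<noteq> mul 0 y"
    using planar_right_cancel[OF y] assms(2) by blast
  then have "mul d (nmult j y) \<noteq> 0"
    using planar_nearring_nearring
    by (simp add: distributive_nmult[OF d] nearring_nmult_mult nearring_zero_mult)
  then have z: "\<not> zero_multiplier mul (nmult j y)"
    unfolding zero_multiplier_def by blast
  have "mul (nmult k d) (nmult j y) = mul (nmult (j * k) d) y"
    using planar_nearring_nearring
    by (simp add: distributive_nmult[OF d] nearring_nmult_mult additive.nat_pow_pow)
  also have "\<dots> = mul 0 (nmult j y)"
    using planar_nearring_nearring assms(3) by (simp add: nearring_zero_mult)
  finally show ?thesis
    using planar_right_cancel[OF z] by blast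
qed

lemma prime_add_ord_distributive:
  assumes d: "d \<in> distributive_elements mul" and "d \<noteq> 0" and "finite (UNIV :: 'a set)"
  shows "prime (add_ord d)"
proof -
  have "add_ord d dvd card (UNIV :: 'a set)"
    using additive.ord_dvd_group_order[of d] by (simp add: order_def)
  then have pos: "add_ord d > 0"
    using assms(3) by (intro Nat.gr0I) (simp add: card_gt_0_iff)
  have ne1: "add_ord d \<noteq> 1"
    using additive.ord_eq_1[of d] assms(2) by simp
  obtain p where p: "prime p" "p dvd add_ord d"
    using prime_factor_nat[OF ne1] by blast
  then obtain j where j: "add_ord d = j * p" by (auto elim: dvdE)
  have "nmult j d \<noteq> 0"
  proof
    assume "nmult j d = 0"
    then have "add_ord d dvd j" using additive.pow_eq_id[of d] by simp
    then have "j * p \<le> j * 1"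
      using j pos by (simp add: dvd_imp_le)
    with j pos prime_gt_1_nat[OF p(1)] show False
      by simp
  qed
  moreover have "nmult (j * p) d = 0"
    by (simp flip: j)
  ultimately have "nmult p d = 0"
    by (rule distributive_nmult_eq_zero[OF d])
  then have "add_ord d dvd p" using additive.pow_eq_id[of d] by simp
  with ne1 p(1) show ?thesis by (metis prime_nat_iff)
qed

lemma zero_multiplier_if_coprime_add_ord:
  assumes d: "d \<in> distributive_elements mul" and "d \<noteq> 0"
    and "nmult k n = 0" and "coprime (add_ord d) k"
  shows "zero_multiplier mul n"
proof -
  have "nmult (add_ord d) (mul d n) = 0"
    using planar_nearring_nearring
    by (simp flip: nearring_nmult_mult add: nearring_zero_mult)
  moreover have "nmult k (mul d n) = 0"
    using assms(3) by (simp flip: distributive_nmult[OF d] add: planar_mult_zero)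
  ultimately have "add_ord (mul d n) dvd gcd (add_ord d) k"
    using additive.pow_eq_id[of "mul d n"] by simp
  then have "mul d n = 0"
    using assms(4) additive.ord_eq_1[of "mul d n"] by simp
  then show ?thesis
    using planar_zero_multiplierI[OF assms(2)] by blast
qed

end

theorem mainTheorem7:
  fixes mul :: "'a::{group_add,finite} \<Rightarrow> 'a \<Rightarrow> 'a"
  assumes "planar_nearring mul"
    and "distributive_elements mul \<noteq> {0}"
  shows "\<exists>p. prime p \<and> p dvd card (UNIV :: 'a set) \<and>
           (\<forall>q S. sylow_add q S \<and> q \<noteq> p \<longrightarrow> (\<forall>n\<in>S. zero_multiplier mul n))"
proof -
  have "0 \<in> distributive_elements mul"
    using assms(1) by (simp add: distributive_elements_def nearring_zero_mult planar_nearring_nearring)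
  then obtain d where d: "d \<in> distributive_elements mul" "d \<noteq> 0"
    using assms(2) by blast
  define p where "p = add_ord d"
  have "prime p"
    unfolding p_def using prime_add_ord_distributive[OF assms(1) d] by simp
  moreover have "p dvd card (UNIV :: 'a set)"
    unfolding p_def using additive.ord_dvd_group_order[of d] by (simp add: order_def)
  moreover have "zero_multiplier mul n"
    if "sylow_add q S" "q \<noteq> p" "n \<in> S" for q S n
  proof -
    have "prime q" "add_subgroup S" "card S = q ^ multiplicity q (card (UNIV :: 'a set))"
      using that(1) by (simp_all add: sylow_add_def)
    then have "coprime p (card S)"
      using \<open>prime p\<close> that(2) by (simp add: primes_coprime coprime_power_right_iff)
    moreover have "nmult (card S) n = 0"
      using nmult_card_add_subgroup \<open>add_subgroup S\<close> finite that(3) by blast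
    ultimately show ?thesis
      unfolding p_def by (rule zero_multiplier_if_coprime_add_ord[OF assms(1) d, rotated])
  qed
  ultimately show ?thesis by blast
qed

end
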